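(* Let $\epsilon\le 1/10$ and consider the multi-value algorithm (with suitable constants $c_1,c_2,c_3>0$) against a late $\epsilon$-bounded adaptive blocking adversary. Then, with high probability, $\sigma_1=\Omega(\log n)$.
   Context: Model: $n$ anonymous nodes, fully interconnected, synchronous rounds; in each round every node first receives the non-blocked messages sent to it in the previous round, computes, then sends messages. Late $\epsilon$-bounded adaptive adversary: at the start of each round $t\ge2$ it knows the full system state at the beginning of round $t-1$ and blocks a set $B_t$ of at most $\epsilon n$ nodes in round $t$ (blocked nodes neither send nor receive in that round); in round 1 it knows the initial state but not that round's coin flips. W.h.p. means with probability at least $1-n^{-\Omega(1)}$. Multi-value algorithm (constants $c_1,c_2,c_3>0$; inputs from a domain of size polynomial in $n$; $\bot$ is a special value with $\bot\le x$ for all $x$): (1) every node $u$ initializes $x_u$ to its input and becomes active with probability $c_1\log n/n$, otherwise inactive; (2) each active node sends $x_u$ to $\lceil c_2\log n\rceil$ nodes chosen uniformly at random; (3) every inactive or blocked node $v$ sets $x_v=\bot$; (4) for iterations $t=1,\dots,\lceil c_3\log n\rceil$, every node $v$ sets $x_v=\max(R\cup\{x_v\})$ where $R$ is the set of newly received values, becomes active if $x_v\neq\bot$, and, if $t<c_3\log n$ and $v$ is active, sends $x_v$ to $2$ nodes chosen uniformly at random; (5) finally every node decides on $x_u$. Let $A$ be the set of nodes active in round 1 and $B_1$ the set of nodes blocked in round 1; $x^*$ is the maximum input value among nodes in $A\setminus B_1$; $\sigma_t$ is the number of nodes whose value is $x^*$ at the end of round (iteration) $t$. *)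

theory Defs
  imports "HOL-Probability.Probability" "HOL-Library.Option_ord"
begin

(* Values are 'nat option'; None plays the role of the special value \<bottom>
   (None \<le> x for all x by Option_ord).
   act u   : coin flip of step (1), node u active in round 1.
   tg (u,i): i-th uniformly random target (i < m = ceil(c2 log n)) of node u in step (2).
   B1, B2  : the nodes blocked in round 1 and round 2 (= iteration 1). *)

definition num_targets :: "nat \<Rightarrow> real \<Rightarrow> nat" where
  "num_targets n c2 = nat \<lceil>c2 * ln (real n)\<rceil>"

definition round1_pmf :: "nat \<Rightarrow> real \<Rightarrow> real \<Rightarrow> ((nat \<Rightarrow> bool) \<times> (nat \<times> nat \<Rightarrow> nat)) pmf" where
  "round1_pmf n c1 c2 =
     pair_pmf (Pi_pmf {..<n} False (\<lambda>_. bernoulli_pmf (c1 * ln (real n) / real n)))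
              (Pi_pmf ({..<n} \<times> {..<num_targets n c2}) 0 (\<lambda>_. pmf_of_set {..<n}))"

definition senders :: "nat \<Rightarrow> nat set \<Rightarrow> (nat \<Rightarrow> bool) \<Rightarrow> nat set" where
  "senders n B1 act = {u \<in> {..<n}. act u \<and> u \<notin> B1}"

definition xstar :: "nat \<Rightarrow> (nat \<Rightarrow> nat) \<Rightarrow> nat set \<Rightarrow> (nat \<Rightarrow> bool) \<Rightarrow> nat" where
  "xstar n inp B1 act = Max (inp ` senders n B1 act)"

definition val0 :: "nat \<Rightarrow> (nat \<Rightarrow> nat) \<Rightarrow> nat set \<Rightarrow> (nat \<Rightarrow> bool) \<Rightarrow> nat \<Rightarrow> nat option" where
  "val0 n inp B1 act v = (if v \<in> senders n B1 act then Some (inp v) else None)"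

definition recvd1 :: "nat \<Rightarrow> real \<Rightarrow> (nat \<Rightarrow> nat) \<Rightarrow> nat set \<Rightarrow> nat set \<Rightarrow>
    (nat \<Rightarrow> bool) \<Rightarrow> (nat \<times> nat \<Rightarrow> nat) \<Rightarrow> nat \<Rightarrow> nat option set" where
  "recvd1 n c2 inp B1 B2 act tg v =
     (if v \<in> B2 then {}
      else {Some (inp u) | u. u \<in> senders n B1 act \<and> (\<exists>i < num_targets n c2. tg (u, i) = v)})"

definition val1 :: "nat \<Rightarrow> real \<Rightarrow> (nat \<Rightarrow> nat) \<Rightarrow> nat set \<Rightarrow> nat set \<Rightarrow>
    (nat \<Rightarrow> bool) \<Rightarrow> (nat \<times> nat \<Rightarrow> nat) \<Rightarrow> nat \<Rightarrow> nat option" where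
  "val1 n c2 inp B1 B2 act tg v = Max (insert (val0 n inp B1 act v) (recvd1 n c2 inp B1 B2 act tg v))"

definition sigma1 :: "nat \<Rightarrow> real \<Rightarrow> (nat \<Rightarrow> nat) \<Rightarrow> nat set \<Rightarrow> nat set \<Rightarrow>
    (nat \<Rightarrow> bool) \<Rightarrow> (nat \<times> nat \<Rightarrow> nat) \<Rightarrow> nat" where
  "sigma1 n c2 inp B1 B2 act tg =
     card {v \<in> {..<n}. val1 n c2 inp B1 B2 act tg v = Some (xstar n inp B1 act)}"

end

(* Take c1 = 2 and c2 = 4. At least 9n/10 nodes are unblocked in round 1, so A - B1 is empty
   only with probability exp(-(9/5) ln n); otherwise fix a node u of A - B1 holding x^*. Its
   m = ceil(4 ln n) random targets are pairwise distinct except with probability m^2/n, and as B2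
   has density at most 1/10, at least half of them fall into B2 with probability at most
   2^m (1/10)^(m/2) <= exp(-m/3). Otherwise more than m/2 distinct nodes outside B2 receive x^*,
   the largest value in circulation, so sigma_1 > m/2 >= 2 ln n. *)

theory Submission
  imports Defs "HOL-Real_Asymp.Real_Asymp"
begin

lemma prob_Pi_pmf_coords:
  assumes "finite A" "T \<subseteq> A"
  shows "measure_pmf.prob (Pi_pmf A d p) {f. \<forall>x\<in>T. f x \<in> C x}
           = (\<Prod>x\<in>T. measure_pmf.prob (p x) (C x))"
proof -
  have "{f. \<forall>x\<in>T. f x \<in> C x} = Pi A (\<lambda>x. if x \<in> T then C x else UNIV)"
    using assms(2) by (auto simp: Pi_def)
  then have "measure_pmf.prob (Pi_pmf A d p) {f. \<forall>x\<in>T. f x \<in> C x}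
      = (\<Prod>x\<in>A. if x \<in> T then measure_pmf.prob (p x) (C x) else 1)"
    using assms(1) by (simp add: measure_Pi_pmf_Pi if_distrib cong: if_cong)
  also have "\<dots> = (\<Prod>x\<in>T. measure_pmf.prob (p x) (C x))"
    using assms by (simp add: prod.If_cases Int_absorb1)
  finally show ?thesis .
qed

lemma prob_Pi_pmf_uniform_all_in:
  assumes "finite I" "T \<subseteq> I" "finite V" "V \<noteq> {}"
  shows "measure_pmf.prob (Pi_pmf I d (\<lambda>_. pmf_of_set V)) {f. \<forall>x\<in>T. f x \<in> W}
           = (real (card (V \<inter> W)) / real (card V)) ^ card T"
  using assms by (simp add: prob_Pi_pmf_coords measure_pmf_of_set)

lemma prob_Pi_pmf_uniform_collision_le:
  assumes "finite I" "x \<in> I" "y \<in> I" "x \<noteq> y" "finite V" "V \<noteq> {}"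
  shows "measure_pmf.prob (Pi_pmf I d (\<lambda>_. pmf_of_set V)) {f. f x = f y} \<le> 1 / real (card V)"
proof -
  let ?P = "Pi_pmf I d (\<lambda>_. pmf_of_set V)"
  let ?outside = "{f. \<forall>z\<in>{x}. f z \<in> - V}"
  let ?both = "\<lambda>v. {f. \<forall>z\<in>{x, y}. f z \<in> {v}}"
  have outside: "measure_pmf.prob ?P ?outside = 0"
    using assms by (subst prob_Pi_pmf_coords) (auto simp: measure_pmf_of_set)
  have both: "measure_pmf.prob ?P (?both v) = 1 / real (card V) ^ 2" if "v \<in> V" for v
    using assms that by (subst prob_Pi_pmf_coords) (auto simp: measure_pmf_of_set power2_eq_square)
  have "{f. f x = f y} \<subseteq> ?outside \<union> (\<Union>v\<in>V. ?both v)"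
    by auto
  then have "measure_pmf.prob ?P {f. f x = f y} \<le> measure_pmf.prob ?P (?outside \<union> (\<Union>v\<in>V. ?both v))"
    by (intro measure_pmf.finite_measure_mono) auto
  also have "\<dots> \<le> measure_pmf.prob ?P ?outside + measure_pmf.prob ?P (\<Union>v\<in>V. ?both v)"
    by (rule measure_Un_le) auto
  also have "\<dots> \<le> measure_pmf.prob ?P ?outside + (\<Sum>v\<in>V. measure_pmf.prob ?P (?both v))"
    using assms(5) by (intro add_left_mono measure_pmf.finite_measure_subadditive_finite) auto
  also have "\<dots> = real (card V) * (1 / real (card V) ^ 2)"
    using outside both by simp
  also have "\<dots> = 1 / real (card V)"
    by (simp add: power2_eq_square)
  finally show ?thesis .
qed

lemma prob_Pi_pmf_uniform_not_inj_le:
  assumes "finite I" "T \<subseteq> I" "finite V" "V \<noteq> {}"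
  shows "measure_pmf.prob (Pi_pmf I d (\<lambda>_. pmf_of_set V)) {f. \<not> inj_on f T}
           \<le> real (card T) ^ 2 / real (card V)"
proof -
  let ?P = "Pi_pmf I d (\<lambda>_. pmf_of_set V)"
  define D where "D = {(x, y) \<in> T \<times> T. x \<noteq> y}"
  have finT: "finite T"
    using assms(1,2) by (rule finite_subset[rotated])
  have fin: "finite D"
    by (rule finite_subset[OF _ finite_cartesian_product[OF finT finT]]) (auto simp: D_def)
  have "measure_pmf.prob ?P {f. \<not> inj_on f T} = measure_pmf.prob ?P (\<Union>p\<in>D. {f. f (fst p) = f (snd p)})"
    by (rule arg_cong[where f = "measure_pmf.prob ?P"]) (auto simp: D_def inj_on_def; blast)
  also have "\<dots> \<le> (\<Sum>p\<in>D. measure_pmf.prob ?P {f. f (fst p) = f (snd p)})"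
    using fin by (intro measure_pmf.finite_measure_subadditive_finite) auto
  also have "\<dots> \<le> (\<Sum>p\<in>D. 1 / real (card V))"
    using assms by (intro sum_mono) (auto simp: D_def intro!: prob_Pi_pmf_uniform_collision_le)
  also have "\<dots> \<le> real (card T) ^ 2 / real (card V)"
  proof -
    have "card D \<le> card (T \<times> T)"
      using finT by (intro card_mono) (auto simp: D_def)
    then show ?thesis
      by (simp add: divide_right_mono power2_eq_square card_cartesian_product flip: of_nat_mult)
  qed
  finally show ?thesis .
qed

lemma prob_Pi_pmf_uniform_many_in_le:
  assumes "finite I" "T \<subseteq> I" "finite V" "V \<noteq> {}"
  shows "measure_pmf.prob (Pi_pmf I d (\<lambda>_. pmf_of_set V)) {f. h \<le> card {x\<in>T. f x \<in> W}}
           \<le> 2 ^ card T * (real (card (V \<inter> W)) / real (card V)) ^ h"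
proof -
  let ?P = "Pi_pmf I d (\<lambda>_. pmf_of_set V)"
  let ?r = "real (card (V \<inter> W)) / real (card V)"
  define Us where "Us = {U. U \<subseteq> T \<and> card U = h}"
  have finT: "finite T"
    using assms(1,2) by (rule finite_subset[rotated])
  have fin: "finite Us"
    unfolding Us_def by (rule finite_subset[of _ "Pow T"]) (auto simp: finT)
  have "{f. h \<le> card {x\<in>T. f x \<in> W}} \<subseteq> (\<Union>U\<in>Us. {f. \<forall>x\<in>U. f x \<in> W})"
  proof
    fix f assume "f \<in> {f. h \<le> card {x\<in>T. f x \<in> W}}"
    then have "h \<le> card {x\<in>T. f x \<in> W}"
      by simp
    then obtain U where "U \<subseteq> {x\<in>T. f x \<in> W}" "card U = h"
      by (rule obtain_subset_with_card_n)
    then show "f \<in> (\<Union>U\<in>Us. {f. \<forall>x\<in>U. f x \<in> W})"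
      unfolding Us_def by blast
  qed
  then have "measure_pmf.prob ?P {f. h \<le> card {x\<in>T. f x \<in> W}}
      \<le> measure_pmf.prob ?P (\<Union>U\<in>Us. {f. \<forall>x\<in>U. f x \<in> W})"
    by (intro measure_pmf.finite_measure_mono) auto
  also have "\<dots> \<le> (\<Sum>U\<in>Us. measure_pmf.prob ?P {f. \<forall>x\<in>U. f x \<in> W})"
    using fin by (intro measure_pmf.finite_measure_subadditive_finite) auto
  also have "\<dots> = (\<Sum>U\<in>Us. ?r ^ h)"
  proof (intro sum.cong refl)
    fix U assume "U \<in> Us"
    then have "U \<subseteq> I" "card U = h"
      using assms(2) by (auto simp: Us_def)
    then show "measure_pmf.prob ?P {f. \<forall>x\<in>U. f x \<in> W} = ?r ^ h"
      using prob_Pi_pmf_uniform_all_in[OF assms(1) _ assms(3,4)] by simp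
  qed
  also have "\<dots> = real (card T choose h) * ?r ^ h"
    using finT by (simp add: Us_def n_subsets)
  also have "\<dots> \<le> 2 ^ card T * ?r ^ h"
  proof -
    have "real (card T choose h) \<le> 2 ^ card T"
      using binomial_le_pow2[of "card T" h] by (metis of_nat_le_iff of_nat_numeral of_nat_power)
    then show ?thesis
      by (intro mult_right_mono) auto
  qed
  finally show ?thesis .
qed

lemma prob_Pi_pmf_uniform_not_inj_or_many_in_le:
  assumes "finite I" "T \<subseteq> I" "finite V" "V \<noteq> {}"
  shows "measure_pmf.prob (Pi_pmf I d (\<lambda>_. pmf_of_set V))
           {f. \<not> inj_on f T \<or> h \<le> card {x\<in>T. f x \<in> W}}
         \<le> real (card T) ^ 2 / real (card V)
           + 2 ^ card T * (real (card (V \<inter> W)) / real (card V)) ^ h"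
proof -
  let ?P = "Pi_pmf I d (\<lambda>_. pmf_of_set V)"
  have "measure_pmf.prob ?P {f. \<not> inj_on f T \<or> h \<le> card {x\<in>T. f x \<in> W}}
      \<le> measure_pmf.prob ?P {f. \<not> inj_on f T} + measure_pmf.prob ?P {f. h \<le> card {x\<in>T. f x \<in> W}}"
    unfolding Collect_disj_eq by (rule measure_Un_le) auto
  also have "\<dots> \<le> real (card T) ^ 2 / real (card V)
      + 2 ^ card T * (real (card (V \<inter> W)) / real (card V)) ^ h"
    by (intro add_mono prob_Pi_pmf_uniform_not_inj_le prob_Pi_pmf_uniform_many_in_le assms)
  finally show ?thesis .
qed

lemma prob_pair_pmf_le_slices:
  assumes "\<And>a. a \<in> S \<Longrightarrow> measure_pmf.prob B {b. (a, b) \<in> F} \<le> q" "0 \<le> q"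
  shows "measure_pmf.prob (pair_pmf A B) {(a, b). a \<notin> S \<or> (a, b) \<in> F}
           \<le> measure_pmf.prob A (- S) + q"
proof -
  let ?X = "{(a, b). a \<notin> S \<or> (a, b) \<in> F}"
  have slice: "emeasure B {b. (a, b) \<in> ?X} \<le> indicator (- S) a + ennreal q" for a
  proof (cases "a \<in> S")
    case True
    then show ?thesis
      using assms(1)[OF True] by (simp add: measure_pmf.emeasure_eq_measure ennreal_leI)
  qed simp
  have "emeasure (pair_pmf A B) ?X = (\<integral>\<^sup>+a. \<integral>\<^sup>+b. indicator ?X (a, b) \<partial>B \<partial>A)"
    by (simp flip: nn_integral_pair_pmf')
  also have "\<dots> = (\<integral>\<^sup>+a. emeasure B {b. (a, b) \<in> ?X} \<partial>A)"
    by (intro nn_integral_cong) (simp flip: nn_integral_indicator add: indicator_def)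
  also have "\<dots> \<le> (\<integral>\<^sup>+a. indicator (- S) a + ennreal q \<partial>A)"
    by (intro nn_integral_mono slice)
  also have "\<dots> = emeasure A (- S) + ennreal q"
    by (simp add: nn_integral_add)
  finally show ?thesis
    using assms(2) by (simp add: measure_pmf.emeasure_eq_measure flip: ennreal_plus)
qed

lemma xstar_attained:
  assumes "senders n B1 act \<noteq> {}"
  shows "\<exists>u \<in> senders n B1 act. inp u = xstar n inp B1 act"
proof -
  have "xstar n inp B1 act \<in> inp ` senders n B1 act"
    unfolding xstar_def using assms by (intro Max_in) (auto simp: senders_def)
  then show ?thesis
    by auto
qed

lemma val1_target_of_max_sender:
  assumes "u \<in> senders n B1 act" "inp u = xstar n inp B1 act"
    and "v \<in> tg ` ({u} \<times> {..<num_targets n c2})" "v \<notin> B2"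
  shows "val1 n c2 inp B1 B2 act tg v = Some (xstar n inp B1 act)"
proof -
  let ?R = "recvd1 n c2 inp B1 B2 act tg v"
  have fin: "finite (senders n B1 act)"
    by (simp add: senders_def)
  have le_xstar: "inp w \<le> xstar n inp B1 act" if "w \<in> senders n B1 act" for w
    unfolding xstar_def using fin that by (intro Max_ge) auto
  have "?R \<subseteq> Some ` inp ` senders n B1 act"
    by (auto simp: recvd1_def)
  then have "finite ?R"
    using fin by (meson finite_imageI finite_subset)
  moreover have "Some (xstar n inp B1 act) \<in> ?R"
    using assms by (force simp: recvd1_def)
  moreover have "y \<le> Some (xstar n inp B1 act)" if "y \<in> insert (val0 n inp B1 act v) ?R" for y
    using that le_xstar by (auto simp: recvd1_def val0_def split: if_splits)
  ultimately show ?thesis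
    unfolding val1_def by (intro Max_eqI) auto
qed

lemma card_image_Diff_inj_on:
  assumes "finite T" "inj_on f T"
  shows "card (f ` T - W) = card T - card {x\<in>T. f x \<in> W}"
proof -
  have "f ` T - W = f ` (T - {x\<in>T. f x \<in> W})"
    by auto
  then have "card (f ` T - W) = card (T - {x\<in>T. f x \<in> W})"
    using assms(2) by (simp add: card_image inj_on_diff)
  then show ?thesis
    using assms(1) by (simp add: card_Diff_subset)
qed

lemma bad_targets_if_sigma1_le_half:
  assumes "u \<in> senders n B1 act" "inp u = xstar n inp B1 act"
    and "sigma1 n c2 inp B1 B2 act tg \<le> num_targets n c2 div 2"
  shows "\<not> inj_on tg ({u} \<times> {..<num_targets n c2})
    \<or> num_targets n c2 - num_targets n c2 div 2
         \<le> card {x \<in> {u} \<times> {..<num_targets n c2}. tg x \<in> B2 \<union> - {..<n}}"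
proof (rule ccontr)
  let ?T = "{u} \<times> {..<num_targets n c2}"
  assume "\<not> ?thesis"
  then have "inj_on tg ?T" and few: "card {x \<in> ?T. tg x \<in> B2 \<union> - {..<n}}
      < num_targets n c2 - num_targets n c2 div 2"
    by auto
  then have "card (tg ` ?T - (B2 \<union> - {..<n}))
      = num_targets n c2 - card {x \<in> ?T. tg x \<in> B2 \<union> - {..<n}}"
    by (simp add: card_image_Diff_inj_on card_cartesian_product)
  moreover have "card (tg ` ?T - (B2 \<union> - {..<n})) \<le> sigma1 n c2 inp B1 B2 act tg"
    unfolding sigma1_def using val1_target_of_max_sender[OF assms(1,2)] by (intro card_mono) auto
  ultimately show False
    using few assms(3) by linarith
qed

lemma prob_senders_empty_le:
  assumes "0 \<le> p" "p \<le> 1" "B1 \<subseteq> {..<n}"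
  shows "measure_pmf.prob (Pi_pmf {..<n} False (\<lambda>_. bernoulli_pmf p)) {act. senders n B1 act = {}}
           \<le> exp (- p * (real n - real (card B1)))"
proof -
  have no_senders: "{act. senders n B1 act = {}} = {act. \<forall>x\<in>{..<n} - B1. act x \<in> {False}}"
    by (auto simp: senders_def)
  have "measure_pmf.prob (Pi_pmf {..<n} False (\<lambda>_. bernoulli_pmf p)) {act. senders n B1 act = {}}
      = (\<Prod>x\<in>{..<n} - B1. measure_pmf.prob (bernoulli_pmf p) {False})"
    unfolding no_senders by (rule prob_Pi_pmf_coords) auto
  also have "\<dots> = (1 - p) ^ card ({..<n} - B1)"
    using assms by (simp add: measure_pmf_single)
  also have "\<dots> \<le> exp (- p) ^ card ({..<n} - B1)"
    using assms exp_ge_add_one_self[of "- p"] by (intro power_mono) auto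
  also have "\<dots> = exp (- p * (real n - real (card B1)))"
    using assms(3) card_mono[OF _ assms(3)]
    by (simp add: card_Diff_subset finite_subset of_nat_diff mult.commute flip: exp_of_nat_mult)
  finally show ?thesis .
qed

lemma pow2_mult_pow_ceil_half_le_exp:
  fixes r :: real
  assumes "0 \<le> r" "r \<le> 1/9"
  shows "2 ^ m * r ^ (m - m div 2) \<le> exp (- real m / 3)"
proof -
  have "r ^ (m - m div 2) \<le> (1/9) ^ (m - m div 2)"
    using assms by (intro power_mono)
  also have "\<dots> = (1/3) ^ (2 * (m - m div 2))"
    by (simp add: power_mult power2_eq_square)
  also have "\<dots> \<le> (1/3) ^ m"
    by (intro power_decreasing) auto
  finally have "2 ^ m * r ^ (m - m div 2) \<le> 2 ^ m * (1/3) ^ m"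
    by (intro mult_left_mono) auto
  also have "\<dots> = (2/3) ^ m"
    by (simp add: power_divide)
  also have "\<dots> \<le> exp (-1/3) ^ m"
    using exp_ge_add_one_self[of "-1/3"] by (intro power_mono) auto
  also have "\<dots> = exp (- real m / 3)"
    by (simp flip: exp_of_nat_mult)
  finally show ?thesis .
qed

lemma prob_round1_failure_le:
  fixes n :: nat and c1 c2 :: real
  defines "p \<equiv> c1 * ln (real n) / real n" and "m \<equiv> num_targets n c2"
  assumes "n > 0" "0 \<le> p" "p \<le> 1" "B1 \<subseteq> {..<n}" "B2 \<subseteq> {..<n}"
  shows "measure_pmf.prob (round1_pmf n c1 c2)
           {(act, tg). senders n B1 act = {} \<or> sigma1 n c2 inp B1 B2 act tg \<le> m div 2}
         \<le> exp (- p * (real n - real (card B1))) + real m ^ 2 / real n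
           + 2 ^ m * (real (card B2) / real n) ^ (m - m div 2)"
proof -
  define h where "h = m - m div 2"
  define W where "W = B2 \<union> - {..<n}"
  define S where "S = {act. senders n B1 act \<noteq> {}}"
  \<comment> \<open>Quantifying over all holders of x^* keeps F choice-free; on a slice one holder suffices.\<close>
  define F where "F = {(act, tg). \<forall>u \<in> senders n B1 act. inp u = xstar n inp B1 act \<longrightarrow>
      \<not> inj_on tg ({u} \<times> {..<m}) \<or> h \<le> card {x \<in> {u} \<times> {..<m}. tg x \<in> W}}"
  define q where "q = real m ^ 2 / real n + 2 ^ m * (real (card B2) / real n) ^ h"
  have q_nonneg: "0 \<le> q"
    unfolding q_def by (intro add_nonneg_nonneg mult_nonneg_nonneg) auto
  let ?A = "Pi_pmf {..<n} False (\<lambda>_. bernoulli_pmf p)"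
  let ?B = "Pi_pmf ({..<n} \<times> {..<m}) 0 (\<lambda>_. pmf_of_set {..<n})"
  have covered: "{(act, tg). senders n B1 act = {} \<or> sigma1 n c2 inp B1 B2 act tg \<le> m div 2}
      \<subseteq> {(a, b). a \<notin> S \<or> (a, b) \<in> F}"
    using bad_targets_if_sigma1_le_half by (fastforce simp: S_def F_def W_def h_def m_def)
  have slice: "measure_pmf.prob ?B {b. (a, b) \<in> F} \<le> q" if a: "a \<in> S" for a
  proof -
    obtain u where u: "u \<in> senders n B1 a" "inp u = xstar n inp B1 a"
      using xstar_attained[of n B1 a inp] a by (auto simp: S_def)
    then have T: "{u} \<times> {..<m} \<subseteq> {..<n} \<times> {..<m}"
      by (auto simp: senders_def)
    have "measure_pmf.prob ?B {b. (a, b) \<in> F}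
        \<le> measure_pmf.prob ?B {b. \<not> inj_on b ({u} \<times> {..<m}) \<or> h \<le> card {x \<in> {u} \<times> {..<m}. b x \<in> W}}"
      using u by (intro measure_pmf.finite_measure_mono) (auto simp: F_def)
    also have "\<dots> \<le> q"
    proof -
      have "{..<n} \<inter> W = B2" "{..<n} \<noteq> {}"
        using assms(3,7) by (auto simp: W_def)
      then show ?thesis
        using prob_Pi_pmf_uniform_not_inj_or_many_in_le[OF _ T, of "{..<n}" 0 h W]
        by (simp add: q_def card_cartesian_product)
    qed
    finally show ?thesis .
  qed
  have round1: "round1_pmf n c1 c2 = pair_pmf ?A ?B"
    by (simp add: round1_pmf_def p_def m_def)
  have "measure_pmf.prob (round1_pmf n c1 c2)
      {(act, tg). senders n B1 act = {} \<or> sigma1 n c2 inp B1 B2 act tg \<le> m div 2}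
      \<le> measure_pmf.prob (pair_pmf ?A ?B) {(a, b). a \<notin> S \<or> (a, b) \<in> F}"
    unfolding round1 using covered by (rule measure_pmf.finite_measure_mono) simp
  also have "\<dots> \<le> measure_pmf.prob ?A (- S) + q"
    using slice q_nonneg by (rule prob_pair_pmf_le_slices)
  also have "measure_pmf.prob ?A (- S) \<le> exp (- p * (real n - real (card B1)))"
    using prob_senders_empty_le[OF assms(4-6)] by (simp add: S_def Compl_eq)
  finally show ?thesis
    by (simp add: q_def h_def)
qed

lemma prob_round1_failure_le_log:
  fixes \<epsilon> :: real
  assumes "\<epsilon> \<le> 1/10" "1 \<le> ln (real n)" "2 * ln (real n) / real n \<le> 1"
    and "B1 \<subseteq> {..<n}" "B2 \<subseteq> {..<n}"
    and "real (card B1) \<le> \<epsilon> * real n" "real (card B2) \<le> \<epsilon> * real n"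
  shows "measure_pmf.prob (round1_pmf n 2 4)
           {(act, tg). senders n B1 act = {} \<or> sigma1 n 4 inp B1 B2 act tg \<le> num_targets n 4 div 2}
         \<le> exp (-(9/5) * ln (real n)) + (4 * ln (real n) + 1) ^ 2 / real n
           + exp (-(4/3) * ln (real n))"
proof -
  define L where "L = ln (real n)"
  define m where "m = num_targets n 4"
  define p where "p = 2 * ln (real n) / real n"
  have n: "n > 0"
    using assms(2) by (cases "n = 0") auto
  have m: "4 * L \<le> real m" "real m \<le> 4 * L + 1"
    using assms(2) unfolding m_def num_targets_def L_def by linarith+
  have "\<epsilon> * real n \<le> 1/10 * real n"
    using assms(1) by (rule mult_right_mono) simp
  then have small_B: "real (card B1) \<le> real n / 10" "real (card B2) \<le> real n / 10"
    using assms(6,7) by linarith+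
  have "measure_pmf.prob (round1_pmf n 2 4)
      {(act, tg). senders n B1 act = {} \<or> sigma1 n 4 inp B1 B2 act tg \<le> m div 2}
      \<le> exp (- p * (real n - real (card B1))) + real m ^ 2 / real n
        + 2 ^ m * (real (card B2) / real n) ^ (m - m div 2)"
    unfolding p_def m_def using n assms(2-5) by (intro prob_round1_failure_le) auto
  also have "exp (- p * (real n - real (card B1))) \<le> exp (-(9/5) * L)"
  proof -
    have "(9/5) * L = p * (9/10 * real n)"
      using n by (simp add: p_def L_def)
    also have "\<dots> \<le> p * (real n - real (card B1))"
      using small_B assms(2) n by (intro mult_left_mono) (auto simp: p_def)
    finally show ?thesis
      by simp
  qed
  also have "real m ^ 2 / real n \<le> (4 * L + 1) ^ 2 / real n"
    using m by (intro divide_right_mono power_mono) auto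
  also have "2 ^ m * (real (card B2) / real n) ^ (m - m div 2) \<le> exp (- real m / 3)"
    using small_B n by (intro pow2_mult_pow_ceil_half_le_exp) (auto simp: field_simps)
  also have "\<dots> \<le> exp (-(4/3) * L)"
    using m by simp
  finally show ?thesis
    by (simp add: L_def m_def)
qed

lemma prob_round1_success_ge:
  fixes \<epsilon> :: real
  assumes "\<epsilon> \<le> 1/10" "1 \<le> ln (real n)" "2 * ln (real n) / real n \<le> 1"
    and "B1 \<subseteq> {..<n}" "B2 \<subseteq> {..<n}"
    and "real (card B1) \<le> \<epsilon> * real n" "real (card B2) \<le> \<epsilon> * real n"
  shows "1 - (exp (-(9/5) * ln (real n)) + (4 * ln (real n) + 1) ^ 2 / real n
              + exp (-(4/3) * ln (real n)))
         \<le> measure_pmf.prob (round1_pmf n 2 4)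
              {(act, tg). senders n B1 act \<noteq> {} \<and> ln (real n) \<le> real (sigma1 n 4 inp B1 B2 act tg)}"
proof -
  let ?M = "round1_pmf n 2 4"
  let ?fail = "{(act, tg). senders n B1 act = {} \<or> sigma1 n 4 inp B1 B2 act tg \<le> num_targets n 4 div 2}"
  let ?success = "{(act, tg). senders n B1 act \<noteq> {} \<and> ln (real n) \<le> real (sigma1 n 4 inp B1 B2 act tg)}"
  have "ln (real n) \<le> real s" if "num_targets n 4 div 2 < s" for s
  proof -
    have "num_targets n 4 < 2 * s"
      using that by arith
    moreover have "4 * ln (real n) \<le> real (num_targets n 4)"
      unfolding num_targets_def by linarith
    ultimately show ?thesis
      using assms(2) by linarith
  qed
  then have "UNIV - ?fail \<subseteq> ?success"
    by (auto simp: not_le)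
  then have "measure_pmf.prob ?M (UNIV - ?fail) \<le> measure_pmf.prob ?M ?success"
    by (intro measure_pmf.finite_measure_mono) auto
  moreover have "measure_pmf.prob ?M (UNIV - ?fail) = 1 - measure_pmf.prob ?M ?fail"
    using measure_pmf.prob_compl[of ?fail ?M] by simp
  ultimately show ?thesis
    using prob_round1_failure_le_log[OF assms, of inp] by linarith
qed

lemma round1_bounds_eventually:
  "eventually (\<lambda>n. 1 \<le> ln (real n) \<and> 2 * ln (real n) / real n \<le> 1 \<and>
     exp (-(9/5) * ln (real n)) + (4 * ln (real n) + 1)^2 / real n + exp (-(4/3) * ln (real n))
       \<le> real n powr (- (1/4))) sequentially"
  by (intro eventually_conj; real_asymp)

theorem lemma12:
  fixes \<epsilon> :: real
  assumes "0 \<le> \<epsilon>" and "\<epsilon> \<le> 1/10"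
  shows "\<forall>d::nat. \<exists>c1 c2 \<delta> k :: real. c1 > 0 \<and> c2 > 0 \<and> \<delta> > 0 \<and> k > 0 \<and>
    (\<exists>N::nat. \<forall>n \<ge> N. \<forall>(inp :: nat \<Rightarrow> nat) (B1 :: nat set) (B2 :: nat set).
       (\<forall>v < n. inp v < n ^ d) \<longrightarrow>
       B1 \<subseteq> {..<n} \<longrightarrow> B2 \<subseteq> {..<n} \<longrightarrow>
       real (card B1) \<le> \<epsilon> * real n \<longrightarrow> real (card B2) \<le> \<epsilon> * real n \<longrightarrow>
       measure_pmf.prob (round1_pmf n c1 c2)
         {(act, tg). senders n B1 act \<noteq> {} \<and>
                     real (sigma1 n c2 inp B1 B2 act tg) \<ge> \<delta> * ln (real n)}
       \<ge> 1 - real n powr (-k))"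
proof -
  obtain N where N: "\<And>n. N \<le> n \<Longrightarrow> 1 \<le> ln (real n) \<and> 2 * ln (real n) / real n \<le> 1 \<and>
      exp (-(9/5) * ln (real n)) + (4 * ln (real n) + 1)^2 / real n + exp (-(4/3) * ln (real n))
        \<le> real n powr (- (1/4))"
    using round1_bounds_eventually unfolding eventually_sequentially by blast
  have success: "1 - real n powr (- (1/4)) \<le> measure_pmf.prob (round1_pmf n 2 4)
      {(act, tg). senders n B1 act \<noteq> {} \<and> 1 * ln (real n) \<le> real (sigma1 n 4 inp B1 B2 act tg)}"
    if "N \<le> n" "B1 \<subseteq> {..<n}" "B2 \<subseteq> {..<n}"
      "real (card B1) \<le> \<epsilon> * real n" "real (card B2) \<le> \<epsilon> * real n" for n inp B1 B2
    using prob_round1_success_ge[OF assms(2) _ _ that(2-5), of inp] N[OF that(1)] by simp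
  show ?thesis
    by (intro allI exI[of _ "2::real"] exI[of _ "4::real"] exI[of _ "1::real"] exI[of _ "1/4::real"]
        conjI exI[of _ N]) (use success in auto)
qed

end
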